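(* Let $p$ be an odd prime, $N=D_{2p^2}=\langle r,s\mid r^{p^2}=s^2=1,\ srs=r^{-1}\rangle$, and $\varphi_1,\varphi_2\in\mathrm{Aut}(N)$ defined by $\varphi_1(r)=r,\ \varphi_1(s)=rs$, $\varphi_2(r)=r^{p+1},\ \varphi_2(s)=s$. The semiregular cyclic subgroups of order $p^2$ of $\mathrm{Hol}(N)$ are exactly the subgroups $$\langle (r,\varphi_1^j\varphi_2^k)\rangle,\quad 0\le j<p^2,\ j\not\equiv -1\pmod p,\ 0\le k<p,$$ and there are $p^3-p^2$ of them.
   Context: $\mathrm{Hol}(N)=N\rtimes\mathrm{Aut}(N)$, with elements $(x,\varphi)$, product $(x,\varphi)(y,\psi)=(x\varphi(y),\varphi\psi)$, acting on $N$ by $(x,\varphi)\cdot n=x\varphi(n)$. A subgroup is semiregular if all stabilizers of points of $N$ under this action are trivial. *)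

theory Defs
  imports "HOL-Algebra.Algebra"
begin

text \<open>Dihedral group of order 2m: element (a,e) stands for r^a s^e, with a in {0..<m}
  and e = True meaning a factor s.  Multiplication: r^a s^e r^b s^f = r^(a +- b) s^(e+f).\<close>
definition dihedral :: "int \<Rightarrow> (int \<times> bool) monoid" where
  "dihedral m = \<lparr> carrier = {0..<m} \<times> UNIV,
     monoid.mult = (\<lambda>(a,e) (b,f). ((a + (if e then - b else b)) mod m, e \<noteq> f)),
     one = (0, False) \<rparr>"

definition dih_r :: "int \<Rightarrow> int \<times> bool" where "dih_r m = (1 mod m, False)"
definition dih_s :: "int \<times> bool" where "dih_s = (0, True)"

definition holomorph :: "('a, 'b) monoid_scheme \<Rightarrow> ('a \<times> ('a \<Rightarrow> 'a)) monoid" where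
  "holomorph N = \<lparr> carrier = carrier N \<times> auto N,
     monoid.mult = (\<lambda>(x,f) (y,g). (x \<otimes>\<^bsub>N\<^esub> f y, f \<otimes>\<^bsub>AutoGroup N\<^esub> g)),
     one = (\<one>\<^bsub>N\<^esub>, \<one>\<^bsub>AutoGroup N\<^esub>) \<rparr>"

definition hol_act :: "('a, 'b) monoid_scheme \<Rightarrow> 'a \<times> ('a \<Rightarrow> 'a) \<Rightarrow> 'a \<Rightarrow> 'a" where
  "hol_act N h n = fst h \<otimes>\<^bsub>N\<^esub> snd h n"

definition semiregular :: "('a, 'b) monoid_scheme \<Rightarrow> ('a \<times> ('a \<Rightarrow> 'a)) set \<Rightarrow> bool" where
  "semiregular N H \<longleftrightarrow>
     (\<forall>n \<in> carrier N. \<forall>h \<in> H. hol_act N h n = n \<longrightarrow> h = \<one>\<^bsub>holomorph N\<^esub>)"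

definition phi1 :: "int \<Rightarrow> (int \<times> bool \<Rightarrow> int \<times> bool)" where
  "phi1 p = (THE f. f \<in> auto (dihedral (p^2)) \<and> f (dih_r (p^2)) = dih_r (p^2)
       \<and> f dih_s = dih_r (p^2) \<otimes>\<^bsub>dihedral (p^2)\<^esub> dih_s)"

definition phi2 :: "int \<Rightarrow> (int \<times> bool \<Rightarrow> int \<times> bool)" where
  "phi2 p = (THE f. f \<in> auto (dihedral (p^2))
       \<and> f (dih_r (p^2)) = dih_r (p^2) [^]\<^bsub>dihedral (p^2)\<^esub> (nat p + 1)
       \<and> f dih_s = dih_s)"

end

theory Submission
  imports Defs "HOL-Number_Theory.Number_Theory"
begin

text \<open>For \<open>m = p\<^sup>2 > 2\<close> every automorphism of \<open>N = D\<^sub>2\<^sub>m\<close> is affine, \<open>r \<mapsto> r\<^sup>u\<close>,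
  \<open>s \<mapsto> r\<^sup>b s\<close>. An element of \<open>Hol(N)\<close> of odd order \<open>p\<^sup>2\<close> therefore has the form
  \<open>(r\<^sup>c, r \<mapsto> r\<^sup>u, s \<mapsto> r\<^sup>b s)\<close>, and Fermat's little theorem forces \<open>u \<equiv> 1 (mod p)\<close>. Its \<open>n\<close>-th
  power has translation part \<open>r\<close> raised to \<open>c (1 + u + \<dots> + u\<^bsup>n-1\<^esup>)\<close>, and for \<open>u \<equiv> 1 (mod p)\<close>
  these geometric sums are injective modulo \<open>p\<^sup>2\<close>. Consequently the element generates a
  semiregular subgroup of order \<open>p\<^sup>2\<close> iff \<open>p\<close> divides neither \<open>c\<close> nor \<open>c + b\<close>, and this
  subgroup contains exactly one element with translation part \<open>r\<close>. Writing
  \<open>u \<equiv> (1 + p)\<^sup>k (mod p\<^sup>2)\<close>, that element is \<open>(r, \<phi>\<^sub>1\<^sup>j \<phi>\<^sub>2\<^sup>k)\<close>, which gives both the list of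
  subgroups and their number \<open>(p\<^sup>2 - p) p\<close>.\<close>

section \<open>The dihedral group and its holomorph\<close>

lemma dihedral_carrier: "carrier (dihedral m) = {0..<m} \<times> UNIV"
  by (simp add: dihedral_def)

lemma dihedral_mult:
  "(a, e) \<otimes>\<^bsub>dihedral m\<^esub> (b, f) = ((a + (if e then - b else b)) mod m, e \<noteq> f)"
  by (simp add: dihedral_def)

lemma dihedral_one: "\<one>\<^bsub>dihedral m\<^esub> = (0, False)"
  by (simp add: dihedral_def)

lemma group_dihedral:
  assumes "m > 0"
  shows "group (dihedral m)"
proof (rule groupI)
  fix x y assume "x \<in> carrier (dihedral m)" "y \<in> carrier (dihedral m)"
  then show "x \<otimes>\<^bsub>dihedral m\<^esub> y \<in> carrier (dihedral m)"
    using assms by (cases x; cases y) (auto simp: dihedral_carrier dihedral_mult)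
next
  show "\<one>\<^bsub>dihedral m\<^esub> \<in> carrier (dihedral m)"
    using assms by (simp add: dihedral_carrier dihedral_one)
next
  fix x y z
  show "x \<otimes>\<^bsub>dihedral m\<^esub> y \<otimes>\<^bsub>dihedral m\<^esub> z = x \<otimes>\<^bsub>dihedral m\<^esub> (y \<otimes>\<^bsub>dihedral m\<^esub> z)"
    by (cases x; cases y; cases z) (simp add: dihedral_mult mod_simps algebra_simps)
next
  fix x assume "x \<in> carrier (dihedral m)"
  then show "\<one>\<^bsub>dihedral m\<^esub> \<otimes>\<^bsub>dihedral m\<^esub> x = x"
    by (cases x) (auto simp: dihedral_carrier dihedral_mult dihedral_one)
next
  fix x assume x: "x \<in> carrier (dihedral m)"
  obtain a e where [simp]: "x = (a, e)" by fastforce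
  have "(if e then (a, True) else (- a mod m, False)) \<in> carrier (dihedral m)
      \<and> (if e then (a, True) else (- a mod m, False)) \<otimes>\<^bsub>dihedral m\<^esub> x = \<one>\<^bsub>dihedral m\<^esub>"
    using x assms by (auto simp: dihedral_carrier dihedral_mult dihedral_one mod_simps)
  then show "\<exists>y\<in>carrier (dihedral m). y \<otimes>\<^bsub>dihedral m\<^esub> x = \<one>\<^bsub>dihedral m\<^esub>"
    by blast
qed

lemma dihedral_rotation_pow:
  "(c, False) [^]\<^bsub>dihedral m\<^esub> (k::nat) = ((c * int k) mod m, False)"
proof (induction k)
  case 0
  then show ?case by (simp add: dihedral_one)
next
  case (Suc k)
  then show ?case by (simp add: dihedral_mult mod_simps algebra_simps)
qed

lemma holomorph_carrier: "carrier (holomorph N) = carrier N \<times> auto N"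
  by (simp add: holomorph_def)

lemma holomorph_mult:
  "(x, f) \<otimes>\<^bsub>holomorph N\<^esub> (y, g) = (x \<otimes>\<^bsub>N\<^esub> f y, f \<otimes>\<^bsub>AutoGroup N\<^esub> g)"
  by (simp add: holomorph_def)

lemma holomorph_one: "\<one>\<^bsub>holomorph N\<^esub> = (\<one>\<^bsub>N\<^esub>, \<one>\<^bsub>AutoGroup N\<^esub>)"
  by (simp add: holomorph_def)

lemma AutoGroup_mult_eq_compose:
  "f \<in> auto N \<Longrightarrow> g \<in> auto N \<Longrightarrow> f \<otimes>\<^bsub>AutoGroup N\<^esub> g = compose (carrier N) f g"
  by (simp add: AutoGroup_def BijGroup_def auto_def)

lemma AutoGroup_mult_apply:
  "f \<in> auto N \<Longrightarrow> g \<in> auto N \<Longrightarrow> x \<in> carrier N \<Longrightarrow> (f \<otimes>\<^bsub>AutoGroup N\<^esub> g) x = f (g x)"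
  by (simp add: AutoGroup_mult_eq_compose compose_eq)

lemma group_holomorph:
  assumes "group N"
  shows "group (holomorph N)"
proof -
  interpret N: group N by (rule assms)
  interpret A: group "AutoGroup N" by (rule N.AutoGroup)
  have A_carrier: "carrier (AutoGroup N) = auto N"
    by (simp add: AutoGroup_def)
  have closed: "f x \<in> carrier N" if "f \<in> auto N" "x \<in> carrier N" for f x
    using that by (auto simp: auto_def hom_def)
  have hom: "f (x \<otimes>\<^bsub>N\<^esub> y) = f x \<otimes>\<^bsub>N\<^esub> f y" if "f \<in> auto N" "x \<in> carrier N" "y \<in> carrier N" for f x y
    using that by (auto simp: auto_def hom_def)
  show ?thesis
  proof (rule groupI)
    fix a b assume "a \<in> carrier (holomorph N)" "b \<in> carrier (holomorph N)"
    then show "a \<otimes>\<^bsub>holomorph N\<^esub> b \<in> carrier (holomorph N)"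
      using A.m_closed by (cases a; cases b) (auto simp: holomorph_carrier holomorph_mult closed A_carrier)
  next
    show "\<one>\<^bsub>holomorph N\<^esub> \<in> carrier (holomorph N)"
      using A.one_closed by (simp add: holomorph_carrier holomorph_one A_carrier)
  next
    fix a b c
    assume "a \<in> carrier (holomorph N)" "b \<in> carrier (holomorph N)" "c \<in> carrier (holomorph N)"
    then show "a \<otimes>\<^bsub>holomorph N\<^esub> b \<otimes>\<^bsub>holomorph N\<^esub> c = a \<otimes>\<^bsub>holomorph N\<^esub> (b \<otimes>\<^bsub>holomorph N\<^esub> c)"
      by (cases a; cases b; cases c)
        (simp add: holomorph_carrier holomorph_mult hom closed AutoGroup_mult_apply N.m_assoc A.m_assoc
          flip: A_carrier)
  next
    fix a assume "a \<in> carrier (holomorph N)"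
    then obtain x f where [simp]: "a = (x, f)" and x: "x \<in> carrier N" and f: "f \<in> auto N"
      by (auto simp: holomorph_carrier)
    have "\<one>\<^bsub>AutoGroup N\<^esub> x = x"
      using x by (simp add: AutoGroup_def BijGroup_def)
    then show "\<one>\<^bsub>holomorph N\<^esub> \<otimes>\<^bsub>holomorph N\<^esub> a = a"
      using x f A.l_one[of f] closed[OF f x] by (simp add: holomorph_one holomorph_mult A_carrier)
  next
    fix a assume "a \<in> carrier (holomorph N)"
    then obtain x f where [simp]: "a = (x, f)" and x: "x \<in> carrier N" and f: "f \<in> auto N"
      by (auto simp: holomorph_carrier)
    define g where "g = inv\<^bsub>AutoGroup N\<^esub> f"
    have g: "g \<in> auto N" and gf: "g \<otimes>\<^bsub>AutoGroup N\<^esub> f = \<one>\<^bsub>AutoGroup N\<^esub>"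
      using f by (simp_all add: g_def A_carrier flip: A_carrier)
    interpret g: group_hom N N g
      using g by (simp add: group_hom_def group_hom_axioms_def auto_def N.is_group)
    have "g (inv\<^bsub>N\<^esub> x) \<otimes>\<^bsub>N\<^esub> g x = \<one>\<^bsub>N\<^esub>"
      using x by (simp flip: g.hom_mult)
    then show "\<exists>b\<in>carrier (holomorph N). b \<otimes>\<^bsub>holomorph N\<^esub> a = \<one>\<^bsub>holomorph N\<^esub>"
      using x g gf
      by (intro bexI[of _ "(g (inv\<^bsub>N\<^esub> x), g)"]) (auto simp: holomorph_carrier holomorph_mult holomorph_one closed)
  qed
qed

lemma (in group) generate_singleton_eq:
  assumes "g \<in> carrier G" and "x \<in> generate G {g}" and "ord x = ord g" and "ord g \<noteq> 0"
  shows "generate G {x} = generate G {g}"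
proof -
  have "x \<in> carrier G"
    using assms(1,2) generate_incl by blast
  have "generate G {x} \<subseteq> generate G {g}"
    using assms(1,2) by (intro generate_subgroup_incl generate_is_subgroup) auto
  moreover have "card (generate G {x}) = card (generate G {g})" and "finite (generate G {g})"
    using assms \<open>x \<in> carrier G\<close> by (simp_all add: generate_pow_card card_ge_0_finite flip: generate_pow_card)
  ultimately show ?thesis
    by (simp add: card_subset_eq)
qed

lemma (in group) nat_pow_in_generate:
  assumes "g \<in> carrier G"
  shows "g [^] (n::nat) \<in> generate G {g}"
proof -
  have "g [^] int n \<in> generate G {g}"
    using generate_pow[OF assms] by blast
  then show ?thesis
    by (simp add: int_pow_int)
qed

section \<open>Congruences modulo \<open>p\<^sup>2\<close>\<close>

definition geom_sum :: "int \<Rightarrow> nat \<Rightarrow> int" where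
  "geom_sum u n = (\<Sum>i<n. u ^ i)"

lemma geom_sum_0 [simp]: "geom_sum u 0 = 0"
  by (simp add: geom_sum_def)

lemma geom_sum_Suc: "geom_sum u (Suc n) = geom_sum u n + u ^ n"
  by (simp add: geom_sum_def)

lemma sq_dvd_power_one_plus_mult: "(p::int)^2 dvd (1 + t * p)^n - 1 - int n * t * p"
proof (induction n)
  case 0
  then show ?case by simp
next
  case (Suc n)
  then obtain k where k: "(1 + t * p)^n - 1 - int n * t * p = p^2 * k"
    by (elim dvdE)
  have "(1 + t * p)^Suc n - 1 - int (Suc n) * t * p
      = (1 + t * p) * ((1 + t * p)^n - 1 - int n * t * p) + p^2 * (int n * t^2)"
    by (simp add: algebra_simps power2_eq_square)
  also have "\<dots> = p^2 * ((1 + t * p) * k + int n * t^2)"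
    by (simp only: k) (simp add: algebra_simps)
  finally show ?case by simp
qed

text \<open>The factor 2 avoids dividing \<open>n (n - 1)\<close> by 2 in \<open>geom_sum (1 + t p) n \<equiv> n + t p n (n - 1) / 2\<close>.\<close>

lemma sq_dvd_geom_sum_one_plus_mult:
  "(p::int)^2 dvd 2 * geom_sum (1 + t * p) n - 2 * int n - t * p * int n * (int n - 1)"
proof (induction n)
  case 0
  then show ?case by simp
next
  case (Suc n)
  have eq: "2 * geom_sum (1 + t * p) (Suc n) - 2 * int (Suc n) - t * p * int (Suc n) * (int (Suc n) - 1)
     = (2 * geom_sum (1 + t * p) n - 2 * int n - t * p * int n * (int n - 1))
       + 2 * ((1 + t * p)^n - 1 - int n * t * p)"
    by (simp add: geom_sum_Suc algebra_simps)
  show ?case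
    unfolding eq by (intro dvd_add dvd_mult Suc.IH sq_dvd_power_one_plus_mult)
qed

lemma odd_dvd_double_iff: "odd (d::int) \<Longrightarrow> d dvd 2 * x \<longleftrightarrow> d dvd x"
  by (simp add: coprime_dvd_mult_right_iff coprime_commute)

lemma power_cong_one:
  assumes "(p::int) dvd u - 1"
  shows "p dvd u^n - 1"
  using assms cong_pow[of u 1 p n] by (simp add: cong_iff_dvd_diff)

lemma sq_dvd_power_minus_one:
  assumes "(p::int) dvd u - 1" and "p dvd int n"
  shows "p^2 dvd u^n - 1"
proof -
  obtain t where u: "u = 1 + t * p"
    using assms(1) by (metis dvdE add.commute diff_add_cancel mult.commute)
  obtain k where "int n = p * k"
    using assms(2) by (elim dvdE)
  then have "p^2 dvd int n * t * p"
    by (simp add: power2_eq_square)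
  then have "p^2 dvd ((1 + t * p)^n - 1 - int n * t * p) + int n * t * p"
    by (intro dvd_add sq_dvd_power_one_plus_mult)
  then show ?thesis
    by (simp add: u)
qed

lemma
  assumes "odd (p::int)" and "p dvd u - 1"
  shows dvd_geom_sum_minus: "p dvd geom_sum u n - int n"
    and sq_dvd_geom_sum_minus: "p dvd int n \<Longrightarrow> p^2 dvd geom_sum u n - int n"
proof -
  obtain t where u: "u = 1 + t * p"
    using assms(2) by (metis dvdE add.commute diff_add_cancel mult.commute)
  define err where "err = t * p * int n * (int n - 1)"
  have sq: "p^2 dvd 2 * (geom_sum u n - int n) - err"
    using sq_dvd_geom_sum_one_plus_mult[of p t n] by (simp add: u err_def algebra_simps)
  then have "p dvd 2 * (geom_sum u n - int n) - err"
    by (rule dvd_trans[rotated]) (simp add: power2_eq_square)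
  moreover have "p dvd err"
    by (simp add: err_def)
  ultimately have "p dvd 2 * (geom_sum u n - int n)"
    using dvd_add by fastforce
  then show "p dvd geom_sum u n - int n"
    using odd_dvd_double_iff[OF assms(1)] by blast
  assume "p dvd int n"
  then have "p^2 dvd err"
    by (auto simp: err_def power2_eq_square)
  then have "p^2 dvd 2 * (geom_sum u n - int n)"
    using sq dvd_add by fastforce
  moreover have "odd (p^2)"
    using assms(1) by simp
  ultimately show "p^2 dvd geom_sum u n - int n"
    using odd_dvd_double_iff by blast
qed

lemma sq_dvd_geom_sum_diff_iff:
  assumes "odd (p::int)" and "p dvd u - 1"
  shows "p^2 dvd geom_sum u n - geom_sum u n' \<longleftrightarrow> p^2 dvd int n - int n'"
proof -
  obtain t where u: "u = 1 + t * p"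
    using assms(2) by (metis dvdE add.commute diff_add_cancel mult.commute)
  define D where "D = geom_sum u n - geom_sum u n'"
  define E where "E = int n - int n'"
  define err where "err = t * p * E * (int n + int n' - 1)"
  have "2 * D - (2 * E + err) =
      (2 * geom_sum (1 + t * p) n - 2 * int n - t * p * int n * (int n - 1)) -
      (2 * geom_sum (1 + t * p) n' - 2 * int n' - t * p * int n' * (int n' - 1))"
    by (simp add: D_def E_def err_def u algebra_simps)
  then have key: "p^2 dvd 2 * D - (2 * E + err)"
    using dvd_diff[OF sq_dvd_geom_sum_one_plus_mult sq_dvd_geom_sum_one_plus_mult] by simp
  have err_sq: "p^2 dvd err" if "p dvd E"
    using that by (auto simp: err_def power2_eq_square)
  have odd_sq: "odd (p^2)"
    using assms(1) by simp
  have "p^2 dvd 2 * D \<longleftrightarrow> p^2 dvd (2 * D - (2 * E + err)) + (2 * E + err)"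
    by simp
  also have "\<dots> \<longleftrightarrow> p^2 dvd 2 * E + err"
    using key by (rule dvd_add_right_iff)
  also have "\<dots> \<longleftrightarrow> p^2 dvd 2 * E"
  proof
    assume "p^2 dvd 2 * E + err"
    then have "p dvd 2 * E + err"
      by (rule dvd_trans[rotated]) (simp add: power2_eq_square)
    then have "p dvd 2 * E"
      by (simp add: err_def dvd_add_left_iff)
    then have "p^2 dvd err"
      using err_sq odd_dvd_double_iff[OF assms(1)] by blast
    then show "p^2 dvd 2 * E"
      using \<open>p^2 dvd 2 * E + err\<close> by (simp add: dvd_add_left_iff)
  next
    assume "p^2 dvd 2 * E"
    then have "p dvd E"
      using odd_dvd_double_iff[OF odd_sq] by (auto intro: dvd_trans[rotated] simp: power2_eq_square)
    then show "p^2 dvd 2 * E + err"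
      using err_sq \<open>p^2 dvd 2 * E\<close> by simp
  qed
  finally show ?thesis
    unfolding D_def[symmetric] E_def[symmetric] using odd_dvd_double_iff[OF odd_sq] by simp
qed

lemma fermat_little_int:
  assumes "Factorial_Ring.prime (p::int)"
  shows "[u ^ nat p = u] (mod p)"
proof (cases "p dvd u")
  case True
  moreover have "u dvd u ^ nat p"
    using prime_gt_0_int[OF assms] by (intro dvd_power) simp
  ultimately have "p dvd u ^ nat p"
    by (rule dvd_trans)
  then show ?thesis
    using True by (simp add: cong_iff_dvd_diff)
next
  case False
  then have "coprime u p"
    using assms by (simp add: prime_imp_coprime coprime_commute)
  then have "[u ^ totient (nat p) = 1] (mod p)"
    using assms by (intro residues.euler_theorem) (simp add: residues_def prime_gt_1_int)
  moreover have "totient (nat p) = nat p - 1" and "nat p > 0"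
    using assms prime_gt_0_int by (auto simp: totient_prime prime_nat_iff_prime)
  ultimately have "[u ^ (nat p - 1) = 1] (mod p)"
    by simp
  then have "[u ^ (nat p - 1) * u = 1 * u] (mod p)"
    by (rule cong_scalar_right)
  then show ?thesis
    by (simp only: mult_1 power_minus_mult[OF \<open>nat p > 0\<close>])
qed

lemma prime_dvd_minus_one_if_dvd_power_sq:
  assumes "Factorial_Ring.prime (p::int)" and "p dvd u ^ (nat p * nat p) - 1"
  shows "p dvd u - 1"
proof -
  have "[u ^ (nat p * nat p) = u] (mod p)"
    unfolding power_mult
    using fermat_little_int[OF assms(1), of "u ^ nat p"] fermat_little_int[OF assms(1), of u]
    by (rule cong_trans)
  moreover have "[u ^ (nat p * nat p) = 1] (mod p)"
    using assms(2) by (simp add: cong_iff_dvd_diff)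
  ultimately have "[u = 1] (mod p)"
    using cong_sym cong_trans by blast
  then show ?thesis
    by (simp add: cong_iff_dvd_diff)
qed

lemma power_one_plus_cong: "[(1 + p)^k = 1 + int k * p] (mod (p::int)^2)"
  using sq_dvd_power_one_plus_mult[of p 1 k] by (simp add: cong_iff_dvd_diff algebra_simps)

lemma power_one_plus_cong_iff:
  assumes "(p::int) \<noteq> 0"
  shows "[(1 + p)^k = (1 + p)^k'] (mod p^2) \<longleftrightarrow> [int k = int k'] (mod p)"
proof -
  have "[(1 + p)^k = (1 + p)^k'] (mod p^2) \<longleftrightarrow> [1 + int k * p = 1 + int k' * p] (mod p^2)"
    using power_one_plus_cong[of p k] power_one_plus_cong[of p k'] cong_sym cong_trans by meson
  also have "\<dots> \<longleftrightarrow> p * p dvd (int k - int k') * p"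
    by (simp add: cong_iff_dvd_diff power2_eq_square algebra_simps)
  also have "\<dots> \<longleftrightarrow> [int k = int k'] (mod p)"
    using assms by (simp add: cong_iff_dvd_diff)
  finally show ?thesis .
qed

lemma cong_power_one_plus:
  assumes "(p::int) > 0" and "p dvd u - 1"
  obtains k where "k < nat p" and "[u = (1 + p)^k] (mod p^2)"
proof -
  obtain q where q: "u = 1 + q * p"
    using assms(2) by (metis dvdE add.commute diff_add_cancel mult.commute)
  have "p * p dvd (q - q mod p) * p"
    by (simp add: mod_eq_dvd_iff[symmetric])
  then have "[u = 1 + int (nat (q mod p)) * p] (mod p^2)"
    using assms(1) by (simp add: q cong_iff_dvd_diff power2_eq_square algebra_simps)
  then have "[u = (1 + p)^nat (q mod p)] (mod p^2)"
    using power_one_plus_cong cong_sym cong_trans by blast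
  moreover have "nat (q mod p) < nat p"
    using assms(1) by simp
  ultimately show ?thesis
    using that by blast
qed

lemma card_dvd_Suc_less_mult:
  assumes "P > (0::nat)"
  shows "card {j. j < P * q \<and> P dvd Suc j} = q"
proof -
  have "{j. j < P * q \<and> P dvd Suc j} = (\<lambda>i. P * i + (P - 1)) ` {..<q}"
  proof (intro equalityI subsetI)
    fix j assume "j \<in> {j. j < P * q \<and> P dvd Suc j}"
    then obtain i where i: "Suc j = P * i" and "j < P * q"
      by (auto elim: dvdE)
    then have "P * i \<le> P * q"
      by (simp add: Suc_le_eq flip: i)
    then have "i \<le> q"
      using assms by simp
    have "0 < i"
      using i by (cases i) auto
    moreover have "j = P * (i - 1) + (P - 1)"
      using i \<open>0 < i\<close> assms by (cases i) (auto simp: algebra_simps)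
    ultimately show "j \<in> (\<lambda>i. P * i + (P - 1)) ` {..<q}"
      using \<open>i \<le> q\<close> by force
  next
    fix j assume "j \<in> (\<lambda>i. P * i + (P - 1)) ` {..<q}"
    then obtain i where "i < q" and j: "j = P * i + (P - 1)"
      by blast
    then have "P * Suc i \<le> P * q"
      by (intro mult_le_mono2) simp
    moreover have "Suc j = P * Suc i"
      using assms by (simp add: j)
    ultimately show "j \<in> {j. j < P * q \<and> P dvd Suc j}"
      by simp
  qed
  moreover have "inj_on (\<lambda>i. P * i + (P - 1)) {..<q}"
  proof (rule inj_onI)
    fix x y assume "P * x + (P - 1) = P * y + (P - 1)"
    then have "P * x = P * y"
      by (simp only: add_right_cancel)
    then show "x = y"
      using assms by simp
  qed
  ultimately show ?thesis
    by (simp add: card_image)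
qed

lemma sq_dvd_exponent:
  assumes "Factorial_Ring.prime (p::int)" and "odd p" and "p dvd u - 1" and "\<not> p dvd k"
    and "p^2 dvd k * geom_sum u n + (u^n - 1) * a"
  shows "p^2 dvd int n"
proof -
  have "p dvd k * geom_sum u n + (u^n - 1) * a"
    using assms(5) by (rule dvd_trans[rotated]) (simp add: power2_eq_square)
  moreover have "p dvd (u^n - 1) * a"
    using power_cong_one[OF assms(3)] by simp
  ultimately have "p dvd k * geom_sum u n"
    by (simp add: dvd_add_left_iff)
  then have "p dvd geom_sum u n"
    using assms(1,4) prime_dvd_mult_iff by blast
  then have "p dvd geom_sum u n - (geom_sum u n - int n)"
    using dvd_geom_sum_minus[OF assms(2,3)] by (rule dvd_diff)
  then have "p^2 dvd (u^n - 1) * a"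
    using sq_dvd_power_minus_one[OF assms(3)] by simp
  then have "p^2 dvd k * geom_sum u n"
    using assms(5) by (simp add: dvd_add_left_iff)
  moreover have "coprime (p^2) k"
    using assms(1,4) by (simp add: prime_imp_coprime)
  ultimately have "p^2 dvd geom_sum u n - geom_sum u 0"
    by (simp add: coprime_dvd_mult_right_iff)
  then show ?thesis
    using sq_dvd_geom_sum_diff_iff[OF assms(2,3), of n 0] by simp
qed

section \<open>Automorphisms of dihedral groups\<close>

text \<open>For a unit \<open>u\<close> modulo \<open>m\<close>, \<open>aff m u b\<close> is the automorphism \<open>r \<mapsto> r\<^sup>u\<close>, \<open>s \<mapsto> r\<^sup>b s\<close>.\<close>

definition aff :: "int \<Rightarrow> int \<Rightarrow> int \<Rightarrow> int \<times> bool \<Rightarrow> int \<times> bool" where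
  "aff m u b = restrict (\<lambda>(a, e). ((u * a + (if e then b else 0)) mod m, e)) (carrier (dihedral m))"

lemma aff_apply: "0 \<le> a \<Longrightarrow> a < m \<Longrightarrow> aff m u b (a, e) = ((u * a + (if e then b else 0)) mod m, e)"
  by (simp add: aff_def dihedral_carrier)

lemma aff_cong:
  assumes "[u = u'] (mod m)" and "[b = b'] (mod m)"
  shows "aff m u b = aff m u' b'"
proof -
  have "[u * a + (if e then b else 0) = u' * a + (if e then b' else 0)] (mod m)" for a e
    using assms by (intro cong_add cong_mult) auto
  then show ?thesis
    unfolding aff_def by (intro restrict_ext) (auto simp: cong_def)
qed

lemma aff_eqD:
  assumes "aff m u b = aff m u' b'" and "m > 1"
  shows "[u = u'] (mod m)" and "[b = b'] (mod m)"
proof -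
  have "aff m u b (1, False) = aff m u' b' (1, False)" "aff m u b (0, True) = aff m u' b' (0, True)"
    using assms(1) by simp_all
  then show "[u = u'] (mod m)" "[b = b'] (mod m)"
    using assms(2) by (simp_all add: aff_apply cong_def)
qed

lemma aff_in_auto:
  assumes "coprime u m" and "m > 0"
  shows "aff m u b \<in> auto (dihedral m)"
proof -
  let ?C = "carrier (dihedral m)"
  have mod_right: "(c + u * (x mod m)) mod m = (c + u * x) mod m" for c x
    by (metis mod_add_right_eq mod_mult_right_eq)
  have hom: "aff m u b \<in> hom (dihedral m) (dihedral m)"
  proof (rule homI)
    fix x assume "x \<in> ?C"
    then show "aff m u b x \<in> ?C"
      using assms(2) by (cases x) (simp add: dihedral_carrier aff_apply)
  next
    fix x y assume "x \<in> ?C" "y \<in> ?C"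
    then show "aff m u b (x \<otimes>\<^bsub>dihedral m\<^esub> y) = aff m u b x \<otimes>\<^bsub>dihedral m\<^esub> aff m u b y"
      using assms(2)
      by (cases x; cases y)
        (simp add: dihedral_carrier dihedral_mult aff_apply mod_right mod_simps algebra_simps)
  qed
  have "inj_on (aff m u b) ?C"
  proof (rule inj_onI)
    fix x y assume x: "x \<in> ?C" and y: "y \<in> ?C" and eq: "aff m u b x = aff m u b y"
    obtain a e a' e' where xy: "x = (a, e)" "y = (a', e')" by fastforce
    have range: "0 \<le> a" "a < m" "0 \<le> a'" "a' < m"
      using x y by (auto simp: xy dihedral_carrier)
    have "e = e'"
      using eq range by (simp add: xy aff_apply)
    then have "[u * a + (if e then b else 0) = u * a' + (if e then b else 0)] (mod m)"
      using eq range by (simp add: xy aff_apply cong_def)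
    then have "[a = a'] (mod m)"
      using cong_mult_lcancel[OF assms(1)] cong_add_rcancel by blast
    then show "x = y"
      using range \<open>e = e'\<close> by (simp add: xy cong_def)
  qed
  moreover have "aff m u b ` ?C \<subseteq> ?C"
    using hom by (auto simp: hom_def)
  ultimately have "bij_betw (aff m u b) ?C ?C"
    by (simp add: bij_betw_def endo_inj_surj dihedral_carrier)
  then show ?thesis
    using hom by (simp add: auto_def Bij_def aff_def)
qed

lemma auto_dihedral_rotation_pow:
  assumes "m > 1" and "f \<in> auto (dihedral m)" and "f (1, False) = (u, False)"
    and "0 \<le> a" and "a < m"
  shows "f (a, False) = ((u * a) mod m, False)"
proof -
  interpret f: group_hom "dihedral m" "dihedral m" f
    using assms(1,2) by (simp add: group_hom_def group_hom_axioms_def group_dihedral auto_def)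
  have "f (a, False) = f ((1, False) [^]\<^bsub>dihedral m\<^esub> nat a)"
    using assms(4,5) by (simp add: dihedral_rotation_pow)
  also have "\<dots> = (u, False) [^]\<^bsub>dihedral m\<^esub> nat a"
    using assms(1,3) by (simp add: f.hom_nat_pow dihedral_carrier)
  finally show ?thesis
    using assms(4) by (simp add: dihedral_rotation_pow)
qed

text \<open>A rotation of order \<open>m > 2\<close> cannot be mapped to a reflection, which has order 2; and
  \<open>s\<close> cannot be mapped to a rotation, since otherwise the image would consist of rotations only.\<close>

lemma auto_dihedral_eq_aff:
  assumes m: "m > 2" and f: "f \<in> auto (dihedral m)"
  shows "f = aff m (fst (f (1, False))) (fst (f (0, True)))"
proof -
  let ?N = "dihedral m" and ?C = "carrier (dihedral m)"
  interpret f: group_hom ?N ?N f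
    using m f by (simp add: group_hom_def group_hom_axioms_def group_dihedral auto_def)
  have inj: "inj_on f ?C" and surj: "f ` ?C = ?C"
    using f by (auto simp: auto_def Bij_def bij_betw_def)
  have r: "(1, False) \<in> ?C" and s: "(0, True) \<in> ?C"
    using m by (auto simp: dihedral_carrier)
  obtain u e where fr_eq: "f (1, False) = (u, e)" by fastforce
  obtain b e' where fs_eq: "f (0, True) = (b, e')" by fastforce
  have "\<not> e"
  proof
    assume e
    have "f (2, False) = f (1, False) \<otimes>\<^bsub>?N\<^esub> f (1, False)"
      using m f.hom_mult[OF r r] by (simp add: dihedral_mult)
    also have "\<dots> = f (0, False)"
      using \<open>e\<close> f.hom_one by (simp add: fr_eq dihedral_mult dihedral_one)
    finally show False
      using inj_onD[OF inj, of "(2, False)" "(0, False)"] m by (simp add: dihedral_carrier)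
  qed
  then have fr: "f (1, False) = (u, False)"
    using fr_eq by simp
  have rot: "f (a, False) = ((u * a) mod m, False)" if "0 \<le> a" "a < m" for a
    using auto_dihedral_rotation_pow[OF _ f fr that] m by simp
  have split: "f (a, e) = f (a, False) \<otimes>\<^bsub>?N\<^esub> f (0, e)" if "0 \<le> a" "a < m" for a e
  proof -
    have "f (a, e) = f ((a, False) \<otimes>\<^bsub>?N\<^esub> (0, e))"
      using that by (simp add: dihedral_mult)
    also have "\<dots> = f (a, False) \<otimes>\<^bsub>?N\<^esub> f (0, e)"
      using that m by (intro f.hom_mult) (auto simp: dihedral_carrier)
    finally show ?thesis .
  qed
  have e': e'
  proof (rule ccontr)
    assume "\<not> e'"
    have "snd (f x) = False" if "x \<in> ?C" for x
    proof -
      obtain a e where x: "x = (a, e)" and a: "0 \<le> a" "a < m"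
        using \<open>x \<in> ?C\<close> by (cases x) (auto simp: dihedral_carrier)
      have "f (0, e) = (if e then (b, False) else (0, False))"
        using fs_eq \<open>\<not> e'\<close> f.hom_one by (simp add: dihedral_one)
      then show ?thesis
        using split[OF a, of e] rot[OF a] by (simp add: x dihedral_mult)
    qed
    then show False
      using s surj by (metis image_iff snd_conv)
  qed
  show ?thesis
  proof (rule extensionalityI)
    show "f \<in> extensional ?C" "aff m (fst (f (1, False))) (fst (f (0, True))) \<in> extensional ?C"
      using f by (simp_all add: auto_def Bij_def aff_def)
  next
    fix x assume "x \<in> ?C"
    then obtain a e where x: "x = (a, e)" and a: "0 \<le> a" "a < m"
      by (cases x) (auto simp: dihedral_carrier)
    have "f (0, e) = (if e then (b, True) else (0, False))"
      using fs_eq e' f.hom_one by (simp add: dihedral_one)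
    then show "f x = aff m (fst (f (1, False))) (fst (f (0, True))) x"
      using split[OF a, of e] rot[OF a] a by (simp add: x dihedral_mult aff_apply fr fs_eq mod_simps)
  qed
qed

lemma aff_mult:
  assumes "aff m u b \<in> auto (dihedral m)" and "aff m v c \<in> auto (dihedral m)"
  shows "aff m u b \<otimes>\<^bsub>AutoGroup (dihedral m)\<^esub> aff m v c = aff m (u * v) (u * c + b)"
proof -
  have mod_right: "(d + u * (x mod m)) mod m = (d + u * x) mod m" for d x
    by (metis mod_add_right_eq mod_mult_right_eq)
  have "compose (carrier (dihedral m)) (aff m u b) (aff m v c) = aff m (u * v) (u * c + b)"
    unfolding aff_def compose_def
    by (intro restrict_ext) (auto simp: dihedral_carrier mod_right algebra_simps)
  then show ?thesis
    using assms by (simp add: AutoGroup_mult_eq_compose)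
qed

lemma AutoGroup_dihedral_one: "\<one>\<^bsub>AutoGroup (dihedral m)\<^esub> = aff m 1 0"
  unfolding aff_def by (auto simp: AutoGroup_def BijGroup_def dihedral_carrier intro!: restrict_ext)

lemma aff_pow:
  assumes "m > 0" and "aff m u b \<in> auto (dihedral m)"
  shows "aff m u b [^]\<^bsub>AutoGroup (dihedral m)\<^esub> n = aff m (u ^ n) (b * geom_sum u n)"
proof (induction n)
  case 0
  then show ?case by (simp add: AutoGroup_dihedral_one)
next
  case (Suc n)
  interpret A: group "AutoGroup (dihedral m)"
    using assms(1) by (intro group.AutoGroup group_dihedral)
  have "aff m (u ^ n) (b * geom_sum u n) \<in> auto (dihedral m)"
    using A.nat_pow_closed[of "aff m u b" n] assms(2) Suc.IH by (simp add: AutoGroup_def)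
  then show ?case
    using Suc.IH aff_mult assms(2) by (simp add: geom_sum_Suc algebra_simps)
qed

lemma holomorph_rotation_pow:
  assumes "m > 0" and "((c, False), aff m u b) \<in> carrier (holomorph (dihedral m))"
  shows "((c, False), aff m u b) [^]\<^bsub>holomorph (dihedral m)\<^esub> n
    = (((c * geom_sum u n) mod m, False), aff m (u ^ n) (b * geom_sum u n))"
proof (induction n)
  case 0
  then show ?case by (simp add: holomorph_one dihedral_one AutoGroup_dihedral_one)
next
  case (Suc n)
  interpret H: group "holomorph (dihedral m)"
    using assms(1) by (intro group_holomorph group_dihedral)
  have "aff m (u ^ n) (b * geom_sum u n) \<in> auto (dihedral m)"
    using H.nat_pow_closed[OF assms(2), of n] Suc.IH by (simp add: holomorph_carrier)
  moreover have "aff m u b \<in> auto (dihedral m)" and "0 \<le> c" and "c < m"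
    using assms(2) by (auto simp: holomorph_carrier dihedral_carrier)
  ultimately show ?case
    using Suc.IH
    by (simp add: holomorph_mult aff_mult aff_apply dihedral_mult geom_sum_Suc mod_simps algebra_simps)
qed

lemma holomorph_reflection_pow:
  assumes m: "m > 2" and g: "((c, True), f) \<in> carrier (holomorph (dihedral m))"
  shows "snd (fst (((c, True), f) [^]\<^bsub>holomorph (dihedral m)\<^esub> (n::nat))) = odd n"
proof (induction n)
  case 0
  then show ?case by (simp add: holomorph_one dihedral_one)
next
  case (Suc n)
  interpret H: group "holomorph (dihedral m)"
    using m by (intro group_holomorph group_dihedral) simp
  obtain x h where pow: "((c, True), f) [^]\<^bsub>holomorph (dihedral m)\<^esub> n = (x, h)"
    by fastforce
  have "h \<in> auto (dihedral m)"
    using H.nat_pow_closed[OF g, of n] by (simp add: pow holomorph_carrier)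
  moreover have "0 \<le> c" "c < m"
    using g by (auto simp: holomorph_carrier dihedral_carrier)
  ultimately have "snd (h (c, True))"
    using auto_dihedral_eq_aff[OF m] by (metis aff_apply snd_conv)
  then show ?case
    using Suc.IH pow by (cases x; cases "h (c, True)") (simp add: holomorph_mult dihedral_mult)
qed

lemma hol_act_aff:
  assumes "0 \<le> d" "d < m" "0 \<le> a" "a < m"
  shows "hol_act (dihedral m) ((d, False), aff m v c) (a, e) = ((d + v * a + (if e then c else 0)) mod m, e)"
  using assms by (simp add: hol_act_def aff_apply dihedral_mult mod_simps add.assoc)

section \<open>Semiregular cyclic subgroups of order \<open>p\<^sup>2\<close>\<close>

locale odd_prime_dihedral =
  fixes p :: int
  assumes prime: "Factorial_Ring.prime p" and odd: "odd p"
begin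

abbreviation (input) N where "N \<equiv> dihedral (p^2)"
abbreviation (input) Hol where "Hol \<equiv> holomorph (dihedral (p^2))"

lemma p_ge_3: "p \<ge> 3"
  using prime_gt_1_int[OF prime] odd by (cases "p = 2") auto

lemma sq_gt_2: "p^2 > 2"
  using p_ge_3 power_mono[of 3 p 2] by simp

lemma sq_pos: "p^2 > 0"
  using p_ge_3 by simp

lemma nat_sq: "nat (p^2) = nat p * nat p"
  using p_ge_3 by (simp add: power2_eq_square nat_mult_distrib)

sublocale Hol: group Hol
  by (intro group_holomorph group_dihedral sq_pos)

lemma rotation_pow_eq_one_iff:
  assumes "((c, False), aff (p^2) u b) \<in> carrier Hol" and "p dvd u - 1" and "\<not> p dvd c"
  shows "((c, False), aff (p^2) u b) [^]\<^bsub>Hol\<^esub> n = \<one>\<^bsub>Hol\<^esub> \<longleftrightarrow> p^2 dvd int n"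
proof
  note pow = holomorph_rotation_pow[OF sq_pos assms(1), of n]
  assume "((c, False), aff (p^2) u b) [^]\<^bsub>Hol\<^esub> n = \<one>\<^bsub>Hol\<^esub>"
  then have "p^2 dvd c * geom_sum u n + (u^n - 1) * 0"
    unfolding pow by (simp add: holomorph_one dihedral_one mod_eq_0_iff_dvd)
  then show "p^2 dvd int n"
    using sq_dvd_exponent[OF prime odd assms(2,3)] by blast
next
  assume n: "p^2 dvd int n"
  then have "p^2 dvd geom_sum u n - geom_sum u 0"
    using sq_dvd_geom_sum_diff_iff[OF odd assms(2), of n 0] by simp
  moreover have "p^2 dvd u^n - 1"
    using n by (intro sq_dvd_power_minus_one[OF assms(2)]) (auto intro: dvd_trans[rotated] simp: power2_eq_square)
  ultimately have "aff (p^2) (u^n) (b * geom_sum u n) = aff (p^2) 1 0"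
    by (intro aff_cong) (auto simp: cong_iff_dvd_diff)
  then show "((c, False), aff (p^2) u b) [^]\<^bsub>Hol\<^esub> n = \<one>\<^bsub>Hol\<^esub>"
    using holomorph_rotation_pow[OF sq_pos assms(1)] \<open>p^2 dvd geom_sum u n - geom_sum u 0\<close>
    by (simp add: holomorph_one dihedral_one AutoGroup_dihedral_one)
qed

lemma ord_rotation:
  assumes "((c, False), aff (p^2) u b) \<in> carrier Hol" and "p dvd u - 1" and "\<not> p dvd c"
  shows "Hol.ord ((c, False), aff (p^2) u b) = nat (p^2)"
  using rotation_pow_eq_one_iff[OF assms] sq_gt_2
  by (simp add: Hol.ord_unique[OF assms(1)] flip: int_dvd_int_iff)

text \<open>A power \<open>g\<^sup>n\<close> fixing a point gives a congruence to which \<open>sq_dvd_exponent\<close> applies: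
  at \<open>r\<^sup>a\<close> with coefficient \<open>c\<close>, at \<open>r\<^sup>a s\<close> with coefficient \<open>c + b\<close>.\<close>

lemma semiregular_rotation:
  assumes g: "((c, False), aff (p^2) u b) \<in> carrier Hol" and u: "p dvd u - 1"
    and c: "\<not> p dvd c" and cb: "\<not> p dvd c + b"
  shows "semiregular N (generate Hol {((c, False), aff (p^2) u b)})"
  unfolding semiregular_def
proof (intro ballI impI)
  let ?g = "((c, False), aff (p^2) u b)"
  fix x h assume x: "x \<in> carrier N" and h: "h \<in> generate Hol {?g}" and fixed: "hol_act N h x = x"
  have "Hol.ord ?g \<noteq> 0"
    using ord_rotation[OF g u c] p_ge_3 by simp
  then obtain n where hn: "h = ?g [^]\<^bsub>Hol\<^esub> (n::nat)"
    using h Hol.generate_pow_nat[OF g] by blast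
  define d where "d = (c * geom_sum u n) mod p^2"
  obtain a e where xa: "x = (a, e)" and a: "0 \<le> a" "a < p^2"
    using x by (cases x) (auto simp: dihedral_carrier)
  have d: "0 \<le> d" "d < p^2" and d_cong: "p^2 dvd c * geom_sum u n - d"
    using pos_mod_sign[OF sq_pos] pos_mod_bound[OF sq_pos] by (auto simp: d_def dvd_minus_mod)
  have "h = ((d, False), aff (p^2) (u^n) (b * geom_sum u n))"
    using holomorph_rotation_pow[OF sq_pos g] by (simp add: hn d_def)
  then have "(d + u^n * a + (if e then b * geom_sum u n else 0)) mod p^2 = a mod p^2"
    using fixed hol_act_aff[OF d a] a by (simp add: xa)
  then have "p^2 dvd d + u^n * a + (if e then b * geom_sum u n else 0) - a"
    by (simp add: mod_eq_dvd_iff)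
  with d_cong have "p^2 dvd (c * geom_sum u n - d) + (d + u^n * a + (if e then b * geom_sum u n else 0) - a)"
    by (rule dvd_add)
  also have "(c * geom_sum u n - d) + (d + u^n * a + (if e then b * geom_sum u n else 0) - a)
      = (if e then c + b else c) * geom_sum u n + (u^n - 1) * a"
    by (simp add: algebra_simps)
  finally have "p^2 dvd (if e then c + b else c) * geom_sum u n + (u^n - 1) * a" .
  then have "p^2 dvd int n"
    using sq_dvd_exponent[OF prime odd u] c cb by (cases e) auto
  then show "h = \<one>\<^bsub>Hol\<^esub>"
    using rotation_pow_eq_one_iff[OF g u c] hn by simp
qed

lemma order_sq_imp_rotation:
  assumes g: "g \<in> carrier Hol" and ord: "Hol.ord g = nat (p^2)"
  obtains c u b where "g = ((c, False), aff (p^2) u b)" and "p dvd u - 1"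
proof -
  obtain c e f where gcf: "g = ((c, e), f)" and f: "f \<in> auto N"
    using g by (cases g) (auto simp: holomorph_carrier)
  have one: "g [^]\<^bsub>Hol\<^esub> nat (p^2) = \<one>\<^bsub>Hol\<^esub>"
    using Hol.pow_ord_eq_1[OF g] ord by simp
  have "odd (nat (p^2))"
    using odd p_ge_3 by (simp add: nat_sq even_nat_iff)
  then have "\<not> e"
    using holomorph_reflection_pow[OF sq_gt_2, of c f "nat (p^2)"] g one
    by (auto simp: gcf holomorph_one dihedral_one)
  define u where "u = fst (f (1, False))"
  define b where "b = fst (f (0, True))"
  have g_eq: "g = ((c, False), aff (p^2) u b)"
    using auto_dihedral_eq_aff[OF sq_gt_2 f] \<open>\<not> e\<close> by (simp add: gcf u_def b_def)
  have "aff (p^2) (u ^ nat (p^2)) (b * geom_sum u (nat (p^2))) = aff (p^2) 1 0"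
    using one holomorph_rotation_pow[OF sq_pos g[unfolded g_eq]]
    by (simp add: g_eq holomorph_one AutoGroup_dihedral_one)
  then have "[u ^ nat (p^2) = 1] (mod p^2)"
    using sq_gt_2 by (intro aff_eqD) simp_all
  then have "p^2 dvd u ^ (nat p * nat p) - 1"
    unfolding nat_sq cong_iff_dvd_diff .
  then have "p dvd u ^ (nat p * nat p) - 1"
    by (rule dvd_trans[rotated]) (simp add: power2_eq_square)
  then show ?thesis
    using that g_eq prime_dvd_minus_one_if_dvd_power_sq[OF prime] by blast
qed

text \<open>The \<open>p\<close>-th power of such an element is \<open>(r\<^sup>c\<^sup>p, \<phi>)\<close> with \<open>\<phi>(r\<^sup>a s\<^sup>e) = r\<^sup>a (r\<^sup>b\<^sup>p s)\<^sup>e\<close>; it is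
  not the identity, and it fixes \<open>1\<close> if \<open>p | c\<close>, and \<open>s\<close> if \<open>p | c + b\<close>.\<close>

lemma semiregular_rotation_imp_not_dvd:
  assumes g: "((c, False), aff (p^2) u b) \<in> carrier Hol"
    and ord: "Hol.ord ((c, False), aff (p^2) u b) = nat (p^2)" and u: "p dvd u - 1"
    and semi: "semiregular N (generate Hol {((c, False), aff (p^2) u b)})"
  shows "\<not> p dvd c" and "\<not> p dvd c + b"
proof -
  let ?g = "((c, False), aff (p^2) u b)"
  have p: "p dvd int (nat p)"
    using p_ge_3 by simp
  have "[u ^ nat p = 1] (mod p^2)" and geom: "[geom_sum u (nat p) = p] (mod p^2)"
    using sq_dvd_power_minus_one[OF u p] sq_dvd_geom_sum_minus[OF odd u p] p_ge_3
    by (simp_all add: cong_iff_dvd_diff)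
  then have "aff (p^2) (u ^ nat p) (b * geom_sum u (nat p)) = aff (p^2) 1 (b * p)"
    by (intro aff_cong cong_scalar_left)
  then have pow: "?g [^]\<^bsub>Hol\<^esub> nat p = (((c * geom_sum u (nat p)) mod p^2, False), aff (p^2) 1 (b * p))"
    using holomorph_rotation_pow[OF sq_pos g] by simp
  have "[c * geom_sum u (nat p) = c * p] (mod p^2)"
    using geom by (rule cong_scalar_left)
  then have act: "hol_act N (?g [^]\<^bsub>Hol\<^esub> nat p) (0, e) = (((if e then c + b else c) * p) mod p^2, e)" for e
    using hol_act_aff[of _ "p^2" 0] pos_mod_sign[OF sq_pos] pos_mod_bound[OF sq_pos] sq_pos
    by (simp add: pow cong_def mod_simps algebra_simps)
  have "nat p * 1 < nat p * nat p"
    using p_ge_3 by (intro mult_strict_left_mono) auto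
  then have "\<not> Hol.ord ?g dvd nat p"
    using ord by (simp add: nat_sq nat_dvd_not_less)
  then have ne: "?g [^]\<^bsub>Hol\<^esub> nat p \<noteq> \<one>\<^bsub>Hol\<^esub>"
    by (simp only: Hol.pow_eq_id[OF g] not_False_eq_True)
  have "\<not> p dvd (if e then c + b else c)" for e
  proof
    assume "p dvd (if e then c + b else c)"
    then have "p^2 dvd (if e then c + b else c) * p"
      by (auto simp: power2_eq_square)
    then have "hol_act N (?g [^]\<^bsub>Hol\<^esub> nat p) (0, e) = (0, e)"
      using act[of e] by simp
    moreover have "(0, e) \<in> carrier N"
      using sq_pos by (simp add: dihedral_carrier)
    ultimately show False
      using semi ne Hol.nat_pow_in_generate[OF g] unfolding semiregular_def by blast
  qed
  from this[of False] this[of True] show "\<not> p dvd c" and "\<not> p dvd c + b"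
    by simp_all
qed

lemma exists_pow_translation_one:
  assumes "\<not> p dvd c" and u: "p dvd u - 1"
  obtains n where "(c * geom_sum u n) mod p^2 = 1"
proof -
  define \<tau> where "\<tau> n = (c * geom_sum u n) mod p^2" for n
  have "inj_on \<tau> {..<nat (p^2)}"
  proof (rule inj_onI)
    fix n n' assume "n \<in> {..<nat (p^2)}" "n' \<in> {..<nat (p^2)}" "\<tau> n = \<tau> n'"
    moreover have "coprime (p^2) c"
      using assms(1) prime by (simp add: prime_imp_coprime)
    ultimately have "p^2 dvd int n - int n'"
      by (simp add: \<tau>_def mod_eq_dvd_iff coprime_dvd_mult_right_iff sq_dvd_geom_sum_diff_iff[OF odd u]
          flip: right_diff_distrib)
    then show "n = n'"
      using \<open>n \<in> _\<close> \<open>n' \<in> _\<close> by (auto simp: mod_eq_dvd_iff[symmetric])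
  qed
  moreover have "\<tau> ` {..<nat (p^2)} \<subseteq> {0..<p^2}"
    using pos_mod_sign[OF sq_pos] pos_mod_bound[OF sq_pos] by (auto simp: \<tau>_def)
  ultimately have "\<tau> ` {..<nat (p^2)} = {0..<p^2}"
    using sq_pos by (intro card_subset_eq) (simp_all add: card_image)
  moreover have "1 \<in> {0..<p^2}"
    using sq_gt_2 by simp
  ultimately obtain n where "\<tau> n = 1"
    by (metis imageE)
  then show ?thesis
    using that by (simp add: \<tau>_def)
qed

definition index_set :: "(nat \<times> nat) set" where
  "index_set = {(j, k). j < nat (p^2) \<and> (int j + 1) mod p \<noteq> 0 \<and> k < nat p}"

definition std_gen :: "nat \<Rightarrow> nat \<Rightarrow> (int \<times> bool) \<times> (int \<times> bool \<Rightarrow> int \<times> bool)" where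
  "std_gen j k = ((1, False), aff (p^2) ((1 + p)^k) (int j))"

lemma not_dvd_one: "\<not> p dvd 1"
  using prime by (simp add: prime_int_iff)

lemma aff_power_one_plus_in_auto: "aff (p^2) ((1 + p)^k) b \<in> auto N"
proof -
  have "coprime (1 + p) p"
    using coprime_add_one_left[of p] by (simp add: add.commute)
  then show ?thesis
    using sq_pos by (intro aff_in_auto) simp_all
qed

lemma std_gen_in_carrier: "std_gen j k \<in> carrier Hol"
  using aff_power_one_plus_in_auto sq_gt_2 by (simp add: std_gen_def holomorph_carrier dihedral_carrier)

lemma
  assumes "(j, k) \<in> index_set"
  shows ord_std_gen: "Hol.ord (std_gen j k) = nat (p^2)"
    and semiregular_std_gen: "semiregular N (generate Hol {std_gen j k})"
proof -
  have "p dvd (1 + p)^k - 1"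
    by (rule power_cong_one) simp
  moreover note not_dvd_one
  moreover have "\<not> p dvd 1 + int j"
    using assms by (simp add: index_set_def dvd_eq_mod_eq_0 add.commute)
  ultimately show "Hol.ord (std_gen j k) = nat (p^2)" "semiregular N (generate Hol {std_gen j k})"
    using ord_rotation semiregular_rotation std_gen_in_carrier unfolding std_gen_def by auto
qed

text \<open>A subgroup contains only one element with translation part \<open>r\<close>, so distinct standard
  generators generate distinct subgroups.\<close>

lemma std_gen_unique:
  assumes jk: "(j, k) \<in> index_set" and h: "h \<in> generate Hol {std_gen j k}" and r: "fst h = (1, False)"
  shows "h = std_gen j k"
proof -
  let ?u = "(1 + p)^k"
  have g: "((1, False), aff (p^2) ?u (int j)) \<in> carrier Hol"
    using std_gen_in_carrier by (simp add: std_gen_def)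
  obtain n where hn: "h = std_gen j k [^]\<^bsub>Hol\<^esub> (n::nat)"
    using h Hol.generate_pow_nat[OF std_gen_in_carrier] ord_std_gen[OF jk] p_ge_3 by auto
  then have "geom_sum ?u n mod p^2 = geom_sum ?u 1 mod p^2"
    using r holomorph_rotation_pow[OF sq_pos g] sq_gt_2 by (simp add: std_gen_def geom_sum_def)
  then have "p^2 dvd int n - int 1"
    using sq_dvd_geom_sum_diff_iff[OF odd power_cong_one] by (simp add: mod_eq_dvd_iff)
  then have "int (Hol.ord (std_gen j k)) dvd int n - int 1"
    using ord_std_gen[OF jk] sq_pos by simp
  then have "std_gen j k [^]\<^bsub>Hol\<^esub> int 1 = std_gen j k [^]\<^bsub>Hol\<^esub> int n"
    using Hol.int_pow_eq[OF std_gen_in_carrier] by blast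
  then show ?thesis
    using std_gen_in_carrier by (simp add: hn int_pow_int)
qed

lemma inj_on_std_gen: "inj_on (\<lambda>(j, k). std_gen j k) index_set"
proof (rule inj_onI, clarify)
  fix j k j' k' assume jk: "(j, k) \<in> index_set" "(j', k') \<in> index_set"
    and "std_gen j k = std_gen j' k'"
  then have "aff (p^2) ((1 + p)^k) (int j) = aff (p^2) ((1 + p)^k') (int j')"
    by (simp add: std_gen_def)
  then have "[(1 + p)^k = (1 + p)^k'] (mod p^2)" and "[int j = int j'] (mod p^2)"
    using sq_gt_2 by (simp_all add: aff_eqD)
  then have "[int k = int k'] (mod p)" and "[int j = int j'] (mod p^2)"
    using power_one_plus_cong_iff p_ge_3 by auto
  then show "j = j' \<and> k = k'"
    using jk by (auto simp: index_set_def cong_def)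
qed

lemma not_dvd_one_plus_mult:
  assumes "\<not> p dvd c + b" and "p dvd c * x - 1"
  shows "\<not> p dvd 1 + b * x"
proof
  assume "p dvd 1 + b * x"
  then have "p dvd (1 + b * x) + (c * x - 1)"
    using assms(2) by (rule dvd_add)
  then have "p dvd (c + b) * x"
    by (simp add: algebra_simps)
  then have "p dvd c * x - (c * x - 1)"
    using assms prime prime_dvd_mult_iff by (metis dvd_diff dvd_mult)
  then show False
    using not_dvd_one by simp
qed

lemma mod_sq_in_index_set:
  assumes j: "int j = y mod p^2" and "\<not> p dvd 1 + y" and "k < nat p"
  shows "(j, k) \<in> index_set"
proof -
  have "int j mod p = y mod p"
    unfolding j by (rule mod_mod_cancel) (simp add: power2_eq_square)
  then have "(int j + 1) mod p = (y + 1) mod p"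
    by (rule mod_add_cong) (rule refl)
  then have "(int j + 1) mod p \<noteq> 0"
    using assms(2) by (simp add: dvd_eq_mod_eq_0 add.commute)
  moreover have "j < nat (p^2)"
    using pos_mod_bound[OF sq_pos, of y] j by linarith
  ultimately show ?thesis
    using assms(3) by (simp add: index_set_def)
qed

lemma generate_eq_std_gen:
  assumes g: "g \<in> carrier Hol" and ord: "Hol.ord g = nat (p^2)"
    and semi: "semiregular N (generate Hol {g})"
  obtains j k where "(j, k) \<in> index_set" and "generate Hol {g} = generate Hol {std_gen j k}"
proof -
  obtain c u b where g_eq: "g = ((c, False), aff (p^2) u b)" and u: "p dvd u - 1"
    using order_sq_imp_rotation[OF g ord] .
  have c: "\<not> p dvd c" and cb: "\<not> p dvd c + b"
    using semiregular_rotation_imp_not_dvd[OF _ _ u] g ord semi by (simp_all add: g_eq)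
  obtain n where n: "(c * geom_sum u n) mod p^2 = 1"
    using exists_pow_translation_one[OF c u] .
  obtain k where k: "k < nat p" and uk: "[u^n = (1 + p)^k] (mod p^2)"
    using cong_power_one_plus[OF _ power_cong_one[OF u]] p_ge_3 by auto
  define j where "j = nat ((b * geom_sum u n) mod p^2)"
  have j: "int j = (b * geom_sum u n) mod p^2"
    using pos_mod_sign[OF sq_pos] by (simp add: j_def)
  have pow: "g [^]\<^bsub>Hol\<^esub> n = std_gen j k"
    using holomorph_rotation_pow[OF sq_pos g[unfolded g_eq]] n aff_cong[OF uk, of "b * geom_sum u n" "int j"]
    by (simp add: g_eq std_gen_def j cong_def)
  have "p^2 dvd c * geom_sum u n - 1"
    using dvd_minus_mod[of "p^2" "c * geom_sum u n"] n by simp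
  then have "p dvd c * geom_sum u n - 1"
    by (rule dvd_trans[rotated]) (simp add: power2_eq_square)
  then have jk: "(j, k) \<in> index_set"
    using mod_sq_in_index_set[OF j not_dvd_one_plus_mult[OF cb] k] by simp
  have "generate Hol {std_gen j k} = generate Hol {g}"
    using Hol.generate_singleton_eq[OF g] Hol.nat_pow_in_generate[OF g, of n]
      ord_std_gen[OF jk] ord p_ge_3 by (simp add: pow)
  then show ?thesis
    using that jk by simp
qed

lemma inj_on_generate_std_gen: "inj_on (\<lambda>(j, k). generate Hol {std_gen j k}) index_set"
proof (rule inj_onI, clarify)
  fix j k j' k' assume jk: "(j, k) \<in> index_set" "(j', k') \<in> index_set"
    and eq: "generate Hol {std_gen j k} = generate Hol {std_gen j' k'}"
  have "std_gen j' k' \<in> generate Hol {std_gen j k}"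
    unfolding eq by (rule generate.incl) simp
  moreover have "fst (std_gen j' k') = (1, False)"
    by (simp add: std_gen_def)
  ultimately have "std_gen j' k' = std_gen j k"
    by (rule std_gen_unique[OF jk(1)])
  then show "j = j' \<and> k = k'"
    using inj_onD[OF inj_on_std_gen, of "(j', k')" "(j, k)"] jk by simp
qed

lemma card_index_set: "card index_set = nat (p^3 - p^2)"
proof -
  define P where "P = nat p"
  have p: "p = int P" and P: "P > 0"
    using p_ge_3 by (simp_all add: P_def)
  have "(int j + 1) mod p = 0 \<longleftrightarrow> P dvd Suc j" for j
    unfolding p by (metis dvd_eq_mod_eq_0 int_dvd_int_iff of_nat_Suc add.commute)
  then have "index_set = ({..<P * P} - {j. j < P * P \<and> P dvd Suc j}) \<times> {..<P}"
    by (auto simp: index_set_def nat_sq P_def)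
  moreover have K: "{j. j < P * P \<and> P dvd Suc j} \<subseteq> {..<P * P}"
    by auto
  ultimately have "card index_set = (P * P - P) * P"
    using card_Diff_subset[OF finite_subset[OF K] K] card_dvd_Suc_less_mult[OF P, of P]
    by (simp add: card_cartesian_product)
  moreover have "P * P \<le> P * P * P"
    using P by simp
  then have "int ((P * P - P) * P) = p^3 - p^2"
    by (simp add: p diff_mult_distrib of_nat_diff power2_eq_square power3_eq_cube)
  ultimately show ?thesis
    by (metis nat_int)
qed

lemma dih_r_eq: "dih_r (p^2) = (1, False)"
  using sq_gt_2 by (simp add: dih_r_def)

lemma phi1_eq: "phi1 p = aff (p^2) 1 1"
  unfolding phi1_def
proof (rule the_equality)
  show "aff (p^2) 1 1 \<in> auto N \<and> aff (p^2) 1 1 (dih_r (p^2)) = dih_r (p^2)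
      \<and> aff (p^2) 1 1 dih_s = dih_r (p^2) \<otimes>\<^bsub>N\<^esub> dih_s"
    using aff_power_one_plus_in_auto[of 0 1] aff_apply[OF order_refl sq_pos] sq_gt_2
    by (simp add: dih_r_eq dih_s_def aff_apply dihedral_mult)
next
  fix f assume "f \<in> auto N \<and> f (dih_r (p^2)) = dih_r (p^2) \<and> f dih_s = dih_r (p^2) \<otimes>\<^bsub>N\<^esub> dih_s"
  then show "f = aff (p^2) 1 1"
    using auto_dihedral_eq_aff[OF sq_gt_2, of f] sq_gt_2 by (simp add: dih_r_eq dih_s_def dihedral_mult)
qed

lemma one_plus_less_sq: "1 + p < p^2"
proof -
  have "p * 3 \<le> p * p"
    using p_ge_3 by (intro mult_left_mono) auto
  then show ?thesis
    using p_ge_3 unfolding power2_eq_square by linarith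
qed

lemma dih_r_pow: "dih_r (p^2) [^]\<^bsub>N\<^esub> (nat p + 1) = (1 + p, False)"
  using one_plus_less_sq p_ge_3 unfolding dih_r_eq dihedral_rotation_pow by (simp add: add.commute)

lemma phi2_eq: "phi2 p = aff (p^2) (1 + p) 0"
  unfolding phi2_def dih_r_pow
proof (rule the_equality)
  show "aff (p^2) (1 + p) 0 \<in> auto N \<and> aff (p^2) (1 + p) 0 (dih_r (p^2)) = (1 + p, False)
      \<and> aff (p^2) (1 + p) 0 dih_s = dih_s"
    using aff_power_one_plus_in_auto[of 1 0] one_plus_less_sq p_ge_3 aff_apply[OF order_refl sq_pos]
    by (simp add: dih_r_eq dih_s_def aff_apply)
next
  fix f assume "f \<in> auto N \<and> f (dih_r (p^2)) = (1 + p, False) \<and> f dih_s = dih_s"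
  then show "f = aff (p^2) (1 + p) 0"
    using auto_dihedral_eq_aff[OF sq_gt_2, of f] by (simp add: dih_r_eq dih_s_def)
qed

lemma phi_pow_mult:
  "phi1 p [^]\<^bsub>AutoGroup N\<^esub> (j::nat) \<otimes>\<^bsub>AutoGroup N\<^esub> phi2 p [^]\<^bsub>AutoGroup N\<^esub> (k::nat)
    = aff (p^2) ((1 + p)^k) (int j)"
proof -
  have "phi1 p [^]\<^bsub>AutoGroup N\<^esub> j = aff (p^2) 1 (int j)"
    using aff_pow[OF sq_pos aff_power_one_plus_in_auto[of 0 1], of j] by (simp add: phi1_eq geom_sum_def)
  moreover have "phi2 p [^]\<^bsub>AutoGroup N\<^esub> k = aff (p^2) ((1 + p)^k) 0"
    using aff_pow[OF sq_pos aff_power_one_plus_in_auto[of 1 0], of k] by (simp add: phi2_eq)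
  ultimately show ?thesis
    using aff_mult[OF aff_power_one_plus_in_auto[of 0] aff_power_one_plus_in_auto[of k]] by simp
qed

lemma semiregular_cyclic_subgroups_eq:
  "{H. subgroup H Hol \<and> (\<exists>g \<in> carrier Hol. H = generate Hol {g}) \<and> card H = nat (p^2) \<and> semiregular N H}
    = (\<lambda>(j, k). generate Hol {std_gen j k}) ` index_set"
proof (intro equalityI subsetI)
  fix H assume "H \<in> {H. subgroup H Hol \<and> (\<exists>g \<in> carrier Hol. H = generate Hol {g})
    \<and> card H = nat (p^2) \<and> semiregular N H}"
  then obtain g where g: "g \<in> carrier Hol" and H: "H = generate Hol {g}"
    and "Hol.ord g = nat (p^2)" and "semiregular N H"
    by (auto simp: Hol.generate_pow_card)
  then obtain j k where "(j, k) \<in> index_set" and "H = generate Hol {std_gen j k}"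
    using generate_eq_std_gen[of g] by auto
  then show "H \<in> (\<lambda>(j, k). generate Hol {std_gen j k}) ` index_set"
    by force
next
  fix H assume "H \<in> (\<lambda>(j, k). generate Hol {std_gen j k}) ` index_set"
  then obtain j k where jk: "(j, k) \<in> index_set" and H: "H = generate Hol {std_gen j k}"
    by auto
  then show "H \<in> {H. subgroup H Hol \<and> (\<exists>g \<in> carrier Hol. H = generate Hol {g})
    \<and> card H = nat (p^2) \<and> semiregular N H}"
    using std_gen_in_carrier ord_std_gen[OF jk] semiregular_std_gen[OF jk]
      Hol.generate_is_subgroup Hol.generate_pow_card[of "std_gen j k"]
    by auto
qed

end

theorem lemma13:
  fixes p :: int
  assumes "Factorial_Ring.prime p" and "odd p"
  defines "N \<equiv> dihedral (p^2)"
  defines "Hol \<equiv> holomorph N"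
  defines "A \<equiv> AutoGroup N"
  defines "S \<equiv> {H. subgroup H Hol \<and> (\<exists>g \<in> carrier Hol. H = generate Hol {g})
                   \<and> card H = nat (p^2) \<and> semiregular N H}"
  shows "S = {generate Hol {(dih_r (p^2), phi1 p [^]\<^bsub>A\<^esub> j \<otimes>\<^bsub>A\<^esub> phi2 p [^]\<^bsub>A\<^esub> k)} | j k.
                j < nat (p^2) \<and> (int j + 1) mod p \<noteq> 0 \<and> k < nat p}
         \<and> card S = nat (p^3 - p^2)"
proof -
  interpret odd_prime_dihedral p
    using assms(1,2) by unfold_locales
  have S_eq: "S = (\<lambda>(j, k). generate Hol {std_gen j k}) ` index_set"
    unfolding S_def Hol_def N_def by (rule semiregular_cyclic_subgroups_eq)
  have "(dih_r (p^2), phi1 p [^]\<^bsub>A\<^esub> j \<otimes>\<^bsub>A\<^esub> phi2 p [^]\<^bsub>A\<^esub> k) = std_gen j k" for j k :: nat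
    by (simp add: A_def N_def phi_pow_mult dih_r_eq std_gen_def)
  then have "{generate Hol {(dih_r (p^2), phi1 p [^]\<^bsub>A\<^esub> j \<otimes>\<^bsub>A\<^esub> phi2 p [^]\<^bsub>A\<^esub> k)} | j k.
                j < nat (p^2) \<and> (int j + 1) mod p \<noteq> 0 \<and> k < nat p} = S"
    by (auto simp: S_eq index_set_def)
  moreover have "card S = nat (p^3 - p^2)"
    using card_image[OF inj_on_generate_std_gen] card_index_set by (simp add: S_eq Hol_def N_def)
  ultimately show ?thesis
    by simp
qed

end
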